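(* Let $\Lambda_1$ be a finite irreducible graph with at least two vertices, and let $\Lambda_2$ and $\Gamma$ be finite simple graphs. Suppose that (1) there is an injective homomorphism $\psi\colon A(\Lambda_1*\Lambda_2)\hookrightarrow A(\Gamma)$ satisfying condition (KK), and (2) for $i=1,2$ there are full embeddings $\iota_i\colon\Lambda_i\to\Gamma$ with $\iota_i(V(\Lambda_i))\subset\mathrm{supp}(\psi_i)$, where $\psi_i$ is the restriction of $\psi$ to $A(\Lambda_i)$. Then the map $\iota\colon\Lambda_1*\Lambda_2\to\Gamma$ defined by $\iota(v)=\iota_1(v)$ for $v\in V(\Lambda_1)$ and $\iota(v)=\iota_2(v)$ for $v\in V(\Lambda_2)$ is a full embedding with $\iota(V(\Lambda_1*\Lambda_2))\subset\mathrm{supp}(\psi)$.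
   Context: All graphs are simple. $A(\Gamma) = \langle V(\Gamma) \mid uv=vu \text{ whenever } \{u,v\}\in E(\Gamma)\rangle$ is the right-angled Artin group. A graph embedding is an injective vertex map preserving adjacency; it is full if it also preserves non-adjacency. The join $\Lambda_1*\Lambda_2$ is obtained from the disjoint union by joining every vertex of $\Lambda_1$ to every vertex of $\Lambda_2$; $A(\Lambda_1*\Lambda_2)=A(\Lambda_1)\times A(\Lambda_2)$. A graph is irreducible if it is not the join of two non-empty graphs. The support $\mathrm{supp}(g)$ of $g\in A(\Gamma)$ is the set of vertices $v$ such that $v$ or $v^{-1}$ occurs in a (equivalently, any) shortest word representing $g$. For a homomorphism $\psi\colon A(\Lambda)\to A(\Gamma)$, $\mathrm{supp}(\psi)=\bigcup_{v\in V(\Lambda)}\mathrm{supp}(\psi(v))$. A homomorphism $\psi$ satisfies condition (KK) if for every $v\in V(\Lambda)$ the set $\mathrm{supp}(\psi(v))$ consists of mutually adjacent vertices of $\Gamma$. *)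

theory Defs
  imports Main
begin

definition simple_graph :: "'a set \<Rightarrow> ('a \<times> 'a) set \<Rightarrow> bool" where
  "simple_graph V E \<longleftrightarrow> E \<subseteq> V \<times> V \<and> sym E \<and> irrefl E"

definition join_vertices :: "'a set \<Rightarrow> 'b set \<Rightarrow> ('a + 'b) set" where
  "join_vertices V1 V2 = Inl ` V1 \<union> Inr ` V2"

definition join_edges ::
  "'a set \<Rightarrow> ('a \<times> 'a) set \<Rightarrow> 'b set \<Rightarrow> ('b \<times> 'b) set \<Rightarrow> (('a + 'b) \<times> ('a + 'b)) set" where
  "join_edges V1 E1 V2 E2 =
     {(Inl x, Inl y) | x y. (x, y) \<in> E1} \<union> {(Inr x, Inr y) | x y. (x, y) \<in> E2}
     \<union> {(Inl x, Inr y) | x y. x \<in> V1 \<and> y \<in> V2} \<union> {(Inr y, Inl x) | x y. x \<in> V1 \<and> y \<in> V2}"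

definition irreducible_graph :: "'a set \<Rightarrow> ('a \<times> 'a) set \<Rightarrow> bool" where
  "irreducible_graph V E \<longleftrightarrow>
     \<not> (\<exists>A B. A \<noteq> {} \<and> B \<noteq> {} \<and> A \<union> B = V \<and> A \<inter> B = {} \<and>
            (\<forall>a\<in>A. \<forall>b\<in>B. (a, b) \<in> E))"

definition full_embedding ::
  "'a set \<Rightarrow> ('a \<times> 'a) set \<Rightarrow> 'b set \<Rightarrow> ('b \<times> 'b) set \<Rightarrow> ('a \<Rightarrow> 'b) \<Rightarrow> bool" where
  "full_embedding V E W F \<iota> \<longleftrightarrow>
     inj_on \<iota> V \<and> \<iota> ` V \<subseteq> W \<and>
     (\<forall>u\<in>V. \<forall>v\<in>V. (u, v) \<in> E \<longleftrightarrow> (\<iota> u, \<iota> v) \<in> F)"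

text \<open>Elements of A(\<Gamma>) are represented by words in the generators and their inverses:
  a letter (v, True) stands for v, (v, False) for v^-1.\<close>

type_synonym 'a word = "('a \<times> bool) list"

definition words_on :: "'a set \<Rightarrow> 'a word set" where
  "words_on V = {w. \<forall>l\<in>set w. fst l \<in> V}"

inductive raag_eq :: "('a \<times> 'a) set \<Rightarrow> 'a word \<Rightarrow> 'a word \<Rightarrow> bool" for E where
  refl: "raag_eq E w w"
| sym: "raag_eq E w w' \<Longrightarrow> raag_eq E w' w"
| trans: "raag_eq E u v \<Longrightarrow> raag_eq E v w \<Longrightarrow> raag_eq E u w"
| cancel: "raag_eq E (u @ [(x, b), (x, \<not> b)] @ w) (u @ w)"
| commute: "(x, y) \<in> E \<Longrightarrow> raag_eq E (u @ [(x, b), (y, c)] @ w) (u @ [(y, c), (x, b)] @ w)"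

definition inv_word :: "'a word \<Rightarrow> 'a word" where
  "inv_word w = rev (map (\<lambda>(x, b). (x, \<not> b)) w)"

text \<open>A homomorphism A(\<Lambda>) \<rightarrow> A(\<Gamma>) is determined by the images of the generators; it is
  given by a word f v representing \<psi>(v). Its action on words:\<close>

definition hom_ext :: "('a \<Rightarrow> 'c word) \<Rightarrow> 'a word \<Rightarrow> 'c word" where
  "hom_ext f w = concat (map (\<lambda>(v, b). if b then f v else inv_word (f v)) w)"

definition raag_hom ::
  "'a set \<Rightarrow> ('a \<times> 'a) set \<Rightarrow> 'c set \<Rightarrow> ('c \<times> 'c) set \<Rightarrow> ('a \<Rightarrow> 'c word) \<Rightarrow> bool" where
  "raag_hom V E W F f \<longleftrightarrow>
     (\<forall>v\<in>V. f v \<in> words_on W) \<and>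
     (\<forall>u\<in>V. \<forall>v\<in>V. (u, v) \<in> E \<longrightarrow> raag_eq F (f u @ f v) (f v @ f u))"

definition raag_hom_injective ::
  "'a set \<Rightarrow> ('a \<times> 'a) set \<Rightarrow> 'c set \<Rightarrow> ('c \<times> 'c) set \<Rightarrow> ('a \<Rightarrow> 'c word) \<Rightarrow> bool" where
  "raag_hom_injective V E W F f \<longleftrightarrow>
     raag_hom V E W F f \<and>
     (\<forall>w\<in>words_on V. raag_eq F (hom_ext f w) [] \<longrightarrow> raag_eq E w [])"

definition raag_supp :: "'a set \<Rightarrow> ('a \<times> 'a) set \<Rightarrow> 'a word \<Rightarrow> 'a set" where
  "raag_supp V E w =
     {x. \<exists>w'\<in>words_on V. raag_eq E w' w \<and>
           (\<forall>w''\<in>words_on V. raag_eq E w'' w \<longrightarrow> length w' \<le> length w'') \<and>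
           x \<in> fst ` set w'}"

definition hom_supp ::
  "'a set \<Rightarrow> 'c set \<Rightarrow> ('c \<times> 'c) set \<Rightarrow> ('a \<Rightarrow> 'c word) \<Rightarrow> 'c set" where
  "hom_supp V W F f = (\<Union>v\<in>V. raag_supp W F (f v))"

definition KK :: "'a set \<Rightarrow> 'c set \<Rightarrow> ('c \<times> 'c) set \<Rightarrow> ('a \<Rightarrow> 'c word) \<Rightarrow> bool" where
  "KK V W F f \<longleftrightarrow>
     (\<forall>v\<in>V. \<forall>x\<in>raag_supp W F (f v). \<forall>y\<in>raag_supp W F (f v). x \<noteq> y \<longrightarrow> (x, y) \<in> F)"

end

theory Submission
  imports Defs
begin

text \<open>If \<open>g\<close> and \<open>h\<close> commute in \<open>A(\<Gamma>)\<close> and have clique supports, then every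
  \<open>x \<in> supp g\<close> is adjacent to every \<open>y \<in> supp h\<close> with \<open>y \<noteq> x\<close>. Otherwise \<open>y \<notin> supp g\<close>,
  so \<open>g\<close> has a shortest representative without \<open>y\<close>, all of whose letters commute with \<open>x\<close>;
  minimality then forces a nonzero exponent sum \<open>m\<close> of \<open>x\<close>, and symmetrically for \<open>h\<close> and
  \<open>y\<close> with sum \<open>n\<close>. Sending \<open>x\<close> and \<open>y\<close> to the unitriangular matrices
  \<open>[[1,1],[0,1]]\<close> and \<open>[[1,0],[1,1]]\<close> and all other generators to the identity is a
  homomorphism (as \<open>x\<close> and \<open>y\<close> are not adjacent) mapping \<open>g\<close> and \<open>h\<close> to
  \<open>[[1,m],[0,1]]\<close> and \<open>[[1,0],[n,1]]\<close>, which do not commute since \<open>m n \<noteq> 0\<close>.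

  Applied to \<open>\<psi>(u)\<close> and \<open>\<psi>(w)\<close> for \<open>u \<in> \<Lambda>\<^sub>1\<close>, \<open>w \<in> \<Lambda>\<^sub>2\<close>, this makes
  \<open>\<iota>\<^sub>1(a)\<close> adjacent to \<open>\<iota>\<^sub>2(b)\<close> unless they coincide. They cannot coincide: by irreducibility
  \<open>a\<close> has a non-neighbour \<open>a'\<close> in \<open>\<Lambda>\<^sub>1\<close>, and \<open>\<iota>\<^sub>1(a')\<close> would then be adjacent to
  \<open>\<iota>\<^sub>2(b) = \<iota>\<^sub>1(a)\<close>.\<close>

declare raag_eq.trans [trans]

lemma raag_eq_append_cong:
  "raag_eq E u v \<Longrightarrow> raag_eq E (p @ u @ s) (p @ v @ s)"
proof (induction rule: raag_eq.induct)
  case (refl w)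
  show ?case by (rule raag_eq.refl)
next
  case (sym w w')
  show ?case by (rule raag_eq.sym[OF sym.IH])
next
  case (trans u v w)
  show ?case by (rule raag_eq.trans[OF trans.IH])
next
  case (cancel u x b w)
  show ?case using raag_eq.cancel[of E "p @ u" x b "w @ s"] by simp
next
  case (commute x y u b c w)
  show ?case using raag_eq.commute[OF commute, of "p @ u" b c "w @ s"] by simp
qed

lemma raag_eq_commute_past:
  assumes "\<forall>l\<in>set u. (x, fst l) \<in> E"
  shows "raag_eq E ((x, b) # u) (u @ [(x, b)])"
  using assms
proof (induction u)
  case Nil
  then show ?case by (simp add: raag_eq.refl)
next
  case (Cons l u)
  obtain y c where l: "l = (y, c)" by fastforce
  have "raag_eq E ((x, b) # l # u) (l # (x, b) # u)"
    using raag_eq.commute[of x y E "[]" b c u] Cons.prems l by simp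
  also have "raag_eq E \<dots> (l # u @ [(x, b)])"
    using raag_eq_append_cong[OF Cons.IH, of "[l]" "[]"] Cons.prems by simp
  finally show ?case by simp
qed

lemma raag_eq_gather_letter:
  assumes "\<forall>l\<in>set w. fst l \<noteq> x \<longrightarrow> (x, fst l) \<in> E"
  shows "raag_eq E w (filter (\<lambda>l. fst l \<noteq> x) w @ filter (\<lambda>l. fst l = x) w)"
  using assms
proof (induction w)
  case Nil
  then show ?case by (simp add: raag_eq.refl)
next
  case (Cons l w)
  let ?A = "filter (\<lambda>l. fst l \<noteq> x) w" and ?B = "filter (\<lambda>l. fst l = x) w"
  have IH: "raag_eq E (l # w) (l # ?A @ ?B)"
    using raag_eq_append_cong[OF Cons.IH, of "[l]" "[]"] Cons.prems by simp
  show ?case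
  proof (cases "fst l = x")
    case True
    then obtain b where l: "l = (x, b)" by (cases l) auto
    have "\<forall>l\<in>set ?A. (x, fst l) \<in> E" using Cons.prems by auto
    then have "raag_eq E (l # ?A) (?A @ [l])"
      unfolding l by (rule raag_eq_commute_past)
    then have "raag_eq E (l # ?A @ ?B) (?A @ l # ?B)"
      using raag_eq_append_cong[of E "l # ?A" "?A @ [l]" "[]" ?B] by simp
    with IH have "raag_eq E (l # w) (?A @ l # ?B)" by (rule raag_eq.trans)
    with True show ?thesis by simp
  next
    case False
    with IH show ?thesis by simp
  qed
qed

definition letter_sign :: "'a \<times> bool \<Rightarrow> int" where
  "letter_sign l = (if snd l then 1 else -1)"

definition exp_sum :: "'a \<Rightarrow> 'a word \<Rightarrow> int" where
  "exp_sum x w = sum_list (map (\<lambda>l. if fst l = x then letter_sign l else 0) w)"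

lemma exp_sum_simps [simp]:
  "exp_sum x [] = 0"
  "exp_sum x (l # w) = (if fst l = x then letter_sign l else 0) + exp_sum x w"
  by (simp_all add: exp_sum_def)

lemma exp_sum_filter_letter: "exp_sum x (filter (\<lambda>l. fst l = x) w) = exp_sum x w"
  by (induction w) auto

lemma raag_eq_single_letter_power:
  assumes "\<forall>l\<in>set w. fst l = x"
  shows "raag_eq E w (replicate (nat \<bar>exp_sum x w\<bar>) (x, 0 < exp_sum x w))"
  using assms
proof (induction w)
  case Nil
  then show ?case by (simp add: raag_eq.refl)
next
  case (Cons l w)
  define e where "e = exp_sum x w"
  obtain b where l: "l = (x, b)" using Cons.prems by (cases l) auto
  have IH: "raag_eq E (l # w) ((x, b) # replicate (nat \<bar>e\<bar>) (x, 0 < e))"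
    using raag_eq_append_cong[OF Cons.IH, of "[l]" "[]"] Cons.prems l e_def by simp
  have sum: "exp_sum x (l # w) = letter_sign (x, b) + e" using l e_def by simp
  consider "e = 0" | "e \<noteq> 0" "b = (0 < e)" | "e \<noteq> 0" "b \<noteq> (0 < e)" by blast
  then show ?case
  proof cases
    case 1
    then show ?thesis using IH sum by (cases b) (simp_all add: letter_sign_def)
  next
    case 2
    then have "nat \<bar>exp_sum x (l # w)\<bar> = Suc (nat \<bar>e\<bar>) \<and> (0 < exp_sum x (l # w)) = b"
      unfolding sum by (cases b) (auto simp: letter_sign_def)
    then show ?thesis using IH 2 by simp
  next
    case 3
    define n where "n = nat \<bar>exp_sum x (l # w)\<bar>"
    have n: "nat \<bar>e\<bar> = Suc n \<and> (n = 0 \<or> (0 < exp_sum x (l # w)) = (0 < e))"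
      using 3 unfolding n_def sum by (cases b) (auto simp: letter_sign_def)
    note IH
    also have "(x, b) # replicate (nat \<bar>e\<bar>) (x, 0 < e) = [(x, b), (x, \<not> b)] @ replicate n (x, 0 < e)"
      using n 3 by simp
    also have "raag_eq E \<dots> (replicate n (x, 0 < e))"
      using raag_eq.cancel[of E "[]" x b "replicate n (x, 0 < e)"] by simp
    also have "replicate n (x, 0 < e) = replicate n (x, 0 < exp_sum x (l # w))"
      using n by auto
    finally show ?thesis unfolding n_def .
  qed
qed

definition shortest_rep :: "'a set \<Rightarrow> ('a \<times> 'a) set \<Rightarrow> 'a word \<Rightarrow> 'a word \<Rightarrow> bool" where
  "shortest_rep V E w' w \<longleftrightarrow> w' \<in> words_on V \<and> raag_eq E w' w \<and>
     (\<forall>w''\<in>words_on V. raag_eq E w'' w \<longrightarrow> length w' \<le> length w'')"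

lemma raag_supp_iff:
  "x \<in> raag_supp V E w \<longleftrightarrow> (\<exists>w'. shortest_rep V E w' w \<and> x \<in> fst ` set w')"
  by (auto simp: raag_supp_def shortest_rep_def)

lemma shortest_rep_exp_sum_nonzero:
  assumes rep: "shortest_rep V E w' w" and x: "x \<in> fst ` set w'"
    and commute: "\<forall>l\<in>set w'. fst l \<noteq> x \<longrightarrow> (x, fst l) \<in> E"
  shows "exp_sum x w' \<noteq> 0"
proof
  assume zero: "exp_sum x w' = 0"
  let ?A = "filter (\<lambda>l. fst l \<noteq> x) w'" and ?B = "filter (\<lambda>l. fst l = x) w'"
  obtain l where "l \<in> set w'" "fst l = x" using x by auto
  then have shorter: "length ?A < length w'" by (intro length_filter_less) auto
  have "raag_eq E ?B []"
    using raag_eq_single_letter_power[of ?B x E] zero by (simp add: exp_sum_filter_letter)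
  have "raag_eq E w' (?A @ ?B)" by (rule raag_eq_gather_letter[OF commute])
  also have "raag_eq E \<dots> ?A"
    using raag_eq_append_cong[OF \<open>raag_eq E ?B []\<close>, of ?A "[]"] by simp
  finally have "raag_eq E ?A w'" by (rule raag_eq.sym)
  moreover have "raag_eq E w' w" using rep by (simp add: shortest_rep_def)
  ultimately have "raag_eq E ?A w" by (rule raag_eq.trans)
  moreover have "?A \<in> words_on V" using rep by (auto simp: shortest_rep_def words_on_def)
  ultimately have "length w' \<le> length ?A" using rep by (simp add: shortest_rep_def)
  with shorter show False by simp
qed

definition clique :: "('a \<times> 'a) set \<Rightarrow> 'a set \<Rightarrow> bool" where
  "clique E S \<longleftrightarrow> (\<forall>p\<in>S. \<forall>q\<in>S. p \<noteq> q \<longrightarrow> (p, q) \<in> E)"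

lemma cliqueD: "clique E S \<Longrightarrow> p \<in> S \<Longrightarrow> q \<in> S \<Longrightarrow> p \<noteq> q \<Longrightarrow> (p, q) \<in> E"
  unfolding clique_def by blast

lemma KK_iff_clique: "KK V W F f \<longleftrightarrow> (\<forall>v\<in>V. clique F (raag_supp W F (f v)))"
  unfolding KK_def clique_def ..

lemma clique_supp_rep_avoiding:
  assumes clique: "clique F (raag_supp W F g)" and x: "x \<in> raag_supp W F g"
    and "y \<noteq> x" "(x, y) \<notin> F"
  shows "\<exists>w'. raag_eq F w' g \<and> y \<notin> fst ` set w' \<and> exp_sum x w' \<noteq> 0"
proof -
  obtain w' where rep: "shortest_rep W F w' g" and "x \<in> fst ` set w'"
    using x unfolding raag_supp_iff by blast
  have supp: "p \<in> raag_supp W F g" if "p \<in> fst ` set w'" for p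
    unfolding raag_supp_iff using rep that by blast
  have "\<forall>l\<in>set w'. fst l \<noteq> x \<longrightarrow> (x, fst l) \<in> F"
    using cliqueD[OF clique x] supp by auto
  then have "exp_sum x w' \<noteq> 0"
    by (rule shortest_rep_exp_sum_nonzero[OF rep \<open>x \<in> fst ` set w'\<close>])
  moreover have "y \<notin> fst ` set w'"
    using cliqueD[OF clique x] supp assms(3,4) by blast
  moreover have "raag_eq F w' g" using rep by (simp add: shortest_rep_def)
  ultimately show ?thesis by blast
qed

lemma raag_eq_prod_list_eq:
  fixes \<phi> :: "'a \<times> bool \<Rightarrow> 'm::monoid_mult"
  assumes "raag_eq E w w'"
    and inverse: "\<And>x b. \<phi> (x, b) * \<phi> (x, \<not> b) = 1"
    and commute: "\<And>x y b c. (x, y) \<in> E \<Longrightarrow> \<phi> (x, b) * \<phi> (y, c) = \<phi> (y, c) * \<phi> (x, b)"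
  shows "prod_list (map \<phi> w) = prod_list (map \<phi> w')"
  using assms(1)
proof (induction rule: raag_eq.induct)
  case (cancel u x b w)
  have "\<phi> (x, b) * (\<phi> (x, \<not> b) * z) = z" for z
    using inverse by (simp add: mult.assoc[symmetric])
  then show ?case by simp
next
  case (commute x y u b c w)
  have "\<phi> (x, b) * \<phi> (y, c) = \<phi> (y, c) * \<phi> (x, b)" by (rule assms(3)[OF commute])
  then have "\<phi> (x, b) * (\<phi> (y, c) * z) = \<phi> (y, c) * (\<phi> (x, b) * z)" for z
    by (simp add: mult.assoc[symmetric])
  then show ?case by simp
qed simp_all

datatype mat2 = Mat2 int int int int

instantiation mat2 :: monoid_mult
begin

fun times_mat2 :: "mat2 \<Rightarrow> mat2 \<Rightarrow> mat2" where
  "Mat2 a b c d * Mat2 a' b' c' d' =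
     Mat2 (a * a' + b * c') (a * b' + b * d') (c * a' + d * c') (c * b' + d * d')"

definition one_mat2 :: mat2 where
  "1 = Mat2 1 0 0 1"

instance
proof
  fix p q r :: mat2
  show "p * q * r = p * (q * r)"
    by (cases p; cases q; cases r) (simp add: algebra_simps)
  show "1 * p = p" by (cases p) (simp add: one_mat2_def)
  show "p * 1 = p" by (cases p) (simp add: one_mat2_def)
qed

end

definition pingpong :: "'a \<Rightarrow> 'a \<Rightarrow> 'a \<times> bool \<Rightarrow> mat2" where
  "pingpong x y l =
     (if fst l = x then Mat2 1 (letter_sign l) 0 1
      else if fst l = y then Mat2 1 0 (letter_sign l) 1 else 1)"

lemma raag_eq_pingpong:
  assumes "(x, y) \<notin> E" "(y, x) \<notin> E" "raag_eq E w w'"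
  shows "prod_list (map (pingpong x y) w) = prod_list (map (pingpong x y) w')"
proof (rule raag_eq_prod_list_eq[OF assms(3)])
  show "pingpong x y (v, b) * pingpong x y (v, \<not> b) = 1" for v b
    by (simp add: pingpong_def letter_sign_def one_mat2_def)
  show "pingpong x y (u, b) * pingpong x y (v, c) = pingpong x y (v, c) * pingpong x y (u, b)"
    if "(u, v) \<in> E" for u v b c
    using that assms(1,2) by (auto simp: pingpong_def one_mat2_def)
qed

lemma pingpong_avoiding_snd:
  "y \<notin> fst ` set w \<Longrightarrow> prod_list (map (pingpong x y) w) = Mat2 1 (exp_sum x w) 0 1"
  by (induction w) (auto simp: pingpong_def one_mat2_def)

lemma pingpong_avoiding_fst:
  "x \<notin> fst ` set w \<Longrightarrow> prod_list (map (pingpong x y) w) = Mat2 1 0 (exp_sum y w) 1"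
  by (induction w) (auto simp: pingpong_def one_mat2_def)

lemma commuting_clique_supp_adjacent:
  assumes "sym F"
    and "clique F (raag_supp W F g)" "clique F (raag_supp W F h)"
    and "raag_eq F (g @ h) (h @ g)"
    and "x \<in> raag_supp W F g" "y \<in> raag_supp W F h" "x \<noteq> y"
  shows "(x, y) \<in> F"
proof (rule ccontr)
  assume xy: "(x, y) \<notin> F"
  then have yx: "(y, x) \<notin> F" using \<open>sym F\<close> by (meson symD)
  obtain wg where wg: "raag_eq F wg g" "y \<notin> fst ` set wg" "exp_sum x wg \<noteq> 0"
    using clique_supp_rep_avoiding[OF assms(2,5) assms(7)[symmetric] xy] by blast
  obtain wh where wh: "raag_eq F wh h" "x \<notin> fst ` set wh" "exp_sum y wh \<noteq> 0"
    using clique_supp_rep_avoiding[OF assms(3,6,7) yx] by blast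
  let ?ev = "\<lambda>w. prod_list (map (pingpong x y) w)"
  have "?ev g = ?ev wg" using raag_eq_pingpong[OF xy yx raag_eq.sym[OF wg(1)]] .
  also have "\<dots> = Mat2 1 (exp_sum x wg) 0 1" by (rule pingpong_avoiding_snd[OF wg(2)])
  finally have g: "?ev g = Mat2 1 (exp_sum x wg) 0 1" .
  have "?ev h = ?ev wh" using raag_eq_pingpong[OF xy yx raag_eq.sym[OF wh(1)]] .
  also have "\<dots> = Mat2 1 0 (exp_sum y wh) 1" by (rule pingpong_avoiding_fst[OF wh(2)])
  finally have h: "?ev h = Mat2 1 0 (exp_sum y wh) 1" .
  have "?ev (g @ h) = ?ev (h @ g)" using raag_eq_pingpong[OF xy yx assms(4)] .
  then have "exp_sum x wg * exp_sum y wh = 0" by (simp add: g h algebra_simps)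
  with wg(3) wh(3) show False by simp
qed

lemma irreducible_graph_non_neighbour:
  assumes "irreducible_graph V E" "2 \<le> card V" "a \<in> V"
  obtains a' where "a' \<in> V" "a' \<noteq> a" "(a, a') \<notin> E"
proof (rule ccontr)
  assume "\<not> thesis"
  then have "\<forall>a'\<in>V - {a}. (a, a') \<in> E" using that by blast
  moreover have "V - {a} \<noteq> {}"
  proof
    assume "V - {a} = {}"
    then have "V = {a}" using assms(3) by blast
    then show False using assms(2) by simp
  qed
  ultimately have "\<exists>A B. A \<noteq> {} \<and> B \<noteq> {} \<and> A \<union> B = V \<and> A \<inter> B = {} \<and> (\<forall>a\<in>A. \<forall>b\<in>B. (a, b) \<in> E)"
    using assms(3) by (intro exI[of _ "{a}"] exI[of _ "V - {a}"]) auto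
  then show False using assms(1) unfolding irreducible_graph_def by blast
qed
lemma full_embedding_join:
  assumes "sym F" "full_embedding V1 E1 W F \<iota>1" "full_embedding V2 E2 W F \<iota>2"
    and cross: "\<And>a b. a \<in> V1 \<Longrightarrow> b \<in> V2 \<Longrightarrow> \<iota>1 a \<noteq> \<iota>2 b \<and> (\<iota>1 a, \<iota>2 b) \<in> F"
  shows "full_embedding (join_vertices V1 V2) (join_edges V1 E1 V2 E2) W F (case_sum \<iota>1 \<iota>2)"
  unfolding full_embedding_def
proof (intro conjI ballI)
  show "inj_on (case_sum \<iota>1 \<iota>2) (join_vertices V1 V2)"
  proof (rule inj_onI)
    fix u v assume "u \<in> join_vertices V1 V2" "v \<in> join_vertices V1 V2"
      and "case_sum \<iota>1 \<iota>2 u = case_sum \<iota>1 \<iota>2 v"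
    then show "u = v"
      using assms(2,3) cross unfolding join_vertices_def full_embedding_def inj_on_def
      by (cases u; cases v) (auto, metis)
  qed
  show "case_sum \<iota>1 \<iota>2 ` join_vertices V1 V2 \<subseteq> W"
    using assms(2,3) by (auto simp: full_embedding_def join_vertices_def)
  fix u v assume "u \<in> join_vertices V1 V2" "v \<in> join_vertices V1 V2"
  then show "(u, v) \<in> join_edges V1 E1 V2 E2 \<longleftrightarrow> (case_sum \<iota>1 \<iota>2 u, case_sum \<iota>1 \<iota>2 v) \<in> F"
    using assms(2,3) cross symD[OF \<open>sym F\<close>] unfolding join_vertices_def full_embedding_def
    by (cases u; cases v) (auto simp: join_edges_def)
qed

lemma hom_supp_join:
  "hom_supp (join_vertices V1 V2) W F \<psi> =
     hom_supp V1 W F (\<psi> \<circ> Inl) \<union> hom_supp V2 W F (\<psi> \<circ> Inr)"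
  by (auto simp: hom_supp_def join_vertices_def)

lemma join_supports_adjacent:
  assumes "sym F" "raag_hom (join_vertices V1 V2) (join_edges V1 E1 V2 E2) W F \<psi>"
    and "KK (join_vertices V1 V2) W F \<psi>"
    and "p \<in> hom_supp V1 W F (\<psi> \<circ> Inl)" "q \<in> hom_supp V2 W F (\<psi> \<circ> Inr)" "p \<noteq> q"
  shows "(p, q) \<in> F"
proof -
  obtain u w where uw: "u \<in> V1" "w \<in> V2"
    "p \<in> raag_supp W F (\<psi> (Inl u))" "q \<in> raag_supp W F (\<psi> (Inr w))"
    using assms(4,5) by (auto simp: hom_supp_def)
  then have "Inl u \<in> join_vertices V1 V2" "Inr w \<in> join_vertices V1 V2"
    "(Inl u, Inr w) \<in> join_edges V1 E1 V2 E2"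
    by (auto simp: join_vertices_def join_edges_def)
  then show ?thesis
    using commuting_clique_supp_adjacent[OF \<open>sym F\<close> _ _ _ uw(3,4) \<open>p \<noteq> q\<close>] assms(2,3)
    by (simp add: raag_hom_def KK_iff_clique)
qed

theorem lemma3p3:
  fixes V1 :: "'a set" and E1 :: "('a \<times> 'a) set"
    and V2 :: "'b set" and E2 :: "('b \<times> 'b) set"
    and W :: "'c set" and F :: "('c \<times> 'c) set"
    and \<psi> :: "('a + 'b) \<Rightarrow> 'c word"
    and \<iota>1 :: "'a \<Rightarrow> 'c" and \<iota>2 :: "'b \<Rightarrow> 'c"
  assumes "finite V1" "simple_graph V1 E1" "irreducible_graph V1 E1" "card V1 \<ge> 2"
    and "finite V2" "simple_graph V2 E2"
    and "finite W" "simple_graph W F"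
    and "raag_hom_injective (join_vertices V1 V2) (join_edges V1 E1 V2 E2) W F \<psi>"
    and "KK (join_vertices V1 V2) W F \<psi>"
    and "full_embedding V1 E1 W F \<iota>1" "\<iota>1 ` V1 \<subseteq> hom_supp V1 W F (\<psi> \<circ> Inl)"
    and "full_embedding V2 E2 W F \<iota>2" "\<iota>2 ` V2 \<subseteq> hom_supp V2 W F (\<psi> \<circ> Inr)"
  shows "full_embedding (join_vertices V1 V2) (join_edges V1 E1 V2 E2) W F (case_sum \<iota>1 \<iota>2)
         \<and> case_sum \<iota>1 \<iota>2 ` join_vertices V1 V2 \<subseteq> hom_supp (join_vertices V1 V2) W F \<psi>"
proof -
  have "sym F" using \<open>simple_graph W F\<close> by (simp add: simple_graph_def)
  have hom: "raag_hom (join_vertices V1 V2) (join_edges V1 E1 V2 E2) W F \<psi>"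
    using assms(9) by (simp add: raag_hom_injective_def)
  have adjacent: "(\<iota>1 a, \<iota>2 b) \<in> F" if "a \<in> V1" "b \<in> V2" "\<iota>1 a \<noteq> \<iota>2 b" for a b
    using join_supports_adjacent[OF \<open>sym F\<close> hom assms(10)] that assms(12,14) by blast
  have distinct: "\<iota>1 a \<noteq> \<iota>2 b" if "a \<in> V1" "b \<in> V2" for a b
  proof
    assume eq: "\<iota>1 a = \<iota>2 b"
    obtain a' where a': "a' \<in> V1" "a' \<noteq> a" "(a, a') \<notin> E1"
      using irreducible_graph_non_neighbour assms(3,4) \<open>a \<in> V1\<close> by metis
    then have "\<iota>1 a' \<noteq> \<iota>2 b" and non_adjacent: "(\<iota>1 a, \<iota>1 a') \<notin> F"
      using assms(11) \<open>a \<in> V1\<close> eq by (auto simp: full_embedding_def inj_on_def)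
    then have "(\<iota>1 a', \<iota>1 a) \<in> F" using adjacent a'(1) \<open>b \<in> V2\<close> eq by simp
    with non_adjacent \<open>sym F\<close> show False by (meson symD)
  qed
  have "case_sum \<iota>1 \<iota>2 ` join_vertices V1 V2 \<subseteq> hom_supp (join_vertices V1 V2) W F \<psi>"
    unfolding hom_supp_join using assms(12,14) by (auto simp: join_vertices_def)
  with full_embedding_join[OF \<open>sym F\<close> assms(11,13)] adjacent distinct show ?thesis by blast
qed

end
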